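(* (a) For every real $\alpha\le -1$, $\mathcal{M}_\alpha\subset\mathcal{U}$. (b) For every $\alpha$ with $0\le\alpha\le 1$, $\mathcal{M}_\alpha$ is not a subset of $\mathcal{U}$.
   Context: Let $\mathbb{D}=\{z\in\mathbb{C}:|z|<1\}$ and let $\mathcal{A}$ be the family of functions $f$ analytic in $\mathbb{D}$ with $f(0)=0$, $f'(0)=1$. The class $\mathcal{U}$ consists of all $f\in\mathcal{A}$ such that $\left|\left[\frac{z}{f(z)}\right]^2 f'(z)-1\right|<1$ for all $z\in\mathbb{D}$. For real $\alpha$, the class $\mathcal{M}_\alpha$ of $\alpha$-convex functions consists of all $f\in\mathcal{A}$ with $\frac{f(z)f'(z)}{z}\ne 0$ for $z\in\mathbb{D}$ and $$\operatorname{Re}\left\{(1-\alpha)\frac{zf'(z)}{f(z)}+\alpha\left[1+\frac{zf''(z)}{f'(z)}\right]\right\}>0\quad (z\in\mathbb{D}).$$ *)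

theory Defs
  imports "HOL-Complex_Analysis.Complex_Analysis"
begin

definition classA :: "(complex \<Rightarrow> complex) set" where
  "classA = {f. f analytic_on ball 0 1 \<and> f 0 = 0 \<and> deriv f 0 = 1}"

text \<open>At z = 0 the expression (z/f z)^2 f'(z) is understood as its removable
  value 1, so the defining inequality is imposed for z \<noteq> 0 only.\<close>
definition classU :: "(complex \<Rightarrow> complex) set" where
  "classU = {f \<in> classA. \<forall>z\<in>ball 0 1. z \<noteq> 0 \<longrightarrow>
      cmod ((z / f z)^2 * deriv f z - 1) < 1}"

text \<open>f(z) f'(z)/z \<noteq> 0 on the disc means f z \<noteq> 0 for z \<noteq> 0 and f' z \<noteq> 0
  (at z = 0 the quotient has value f'(0)^2 = 1). At z = 0 the real-part
  expression equals 1 > 0 automatically, so it is imposed for z \<noteq> 0.\<close>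
definition alpha_convex :: "real \<Rightarrow> (complex \<Rightarrow> complex) set" where
  "alpha_convex \<alpha> = {f \<in> classA.
      (\<forall>z\<in>ball 0 1. z \<noteq> 0 \<longrightarrow> f z \<noteq> 0) \<and>
      (\<forall>z\<in>ball 0 1. deriv f z \<noteq> 0) \<and>
      (\<forall>z\<in>ball 0 1. z \<noteq> 0 \<longrightarrow>
         Re ((1 - of_real \<alpha>) * (z * deriv f z / f z)
             + of_real \<alpha> * (1 + z * deriv (deriv f) z / deriv f z)) > 0)}"

end

theory Submission
  imports Defs
begin

text \<open>Every \<open>\<alpha>\<close>-convex function is starlike: at the first point \<open>z0\<close> where \<open>Re (z f'/f)\<close>
  vanishes, \<open>z p'\<close> is real for \<open>p = z f'/f\<close>, so the \<open>\<alpha>\<close>-convexity expression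
  \<open>p + \<alpha> z p'/p\<close> is purely imaginary there.

  For \<open>\<alpha> \<le> -1\<close> write \<open>(z/f)\<^sup>2 f' = 1 - \<omega>\<close>, where \<open>\<omega>\<close> has a double zero at \<open>0\<close>. If \<open>|\<omega>|\<close>
  reached \<open>1\<close>, Jack's lemma at the first such point gives \<open>z \<omega>' = k \<omega>\<close> with \<open>k \<ge> 2\<close>, and
  there the \<open>\<alpha>\<close>-convexity expression has real part \<open>(1 + \<alpha>) Re (z f'/f) + \<alpha> (k/2 - 1) \<le> 0\<close>.

  For \<open>0 \<le> \<alpha> \<le> 1\<close>, the convex (hence \<open>\<alpha>\<close>-convex) function \<open>-log (1 - z)\<close> violates the
  defining inequality of \<open>classU\<close> near \<open>z = 1\<close>.\<close>

text \<open>At a maximum of \<open>Re g\<close> over the closed disc of radius \<open>|z0|\<close>, the derivative of \<open>Re g\<close>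
  along the circle vanishes and the one along the radius is nonnegative.\<close>
lemma max_Re_imp_radial_deriv_nonneg_Reals:
  fixes g :: "complex \<Rightarrow> complex"
  assumes der: "(g has_field_derivative g') (at z0)"
    and max: "\<And>z. norm z \<le> norm z0 \<Longrightarrow> Re (g z) \<le> Re (g z0)"
  shows "z0 * g' \<in> \<real>\<^sub>\<ge>\<^sub>0"
proof -
  have along: "((\<lambda>t. Re (g (c t))) has_field_derivative Re (v * g')) (at t)"
    if "(c has_vector_derivative v) (at t)" "c t = z0" for c :: "real \<Rightarrow> complex" and v t
  proof -
    have "((g \<circ> c) has_vector_derivative (v * g')) (at t)"
      by (rule field_vector_diff_chain_at[OF that(1)]) (use der that(2) in simp)
    from has_field_derivative_Re[OF this] show ?thesis
      by (simp only: o_def)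
  qed
  define tangent where "tangent = (\<lambda>t::real. z0 * exp (\<i> * of_real t))"
  have "((\<lambda>x. z0 * exp (\<i> * x)) has_field_derivative z0 * \<i>) (at (of_real 0))"
    by (rule derivative_eq_intros refl | simp)+
  then have "(tangent has_vector_derivative z0 * \<i>) (at 0)"
    unfolding tangent_def using has_vector_derivative_real_field by fastforce
  from along[OF this] have "Re (z0 * \<i> * g') = 0"
  proof (rule DERIV_local_max[of _ _ _ 1])
    show "\<forall>y. \<bar>0 - y\<bar> < 1 \<longrightarrow> Re (g (tangent y)) \<le> Re (g (tangent 0))"
      using max by (auto simp: tangent_def norm_mult)
  qed (auto simp: tangent_def)
  then have Im: "Im (z0 * g') = 0"
    by simp
  define radial where "radial = (\<lambda>t::real. of_real t * z0)"
  have "((\<lambda>x. x * z0) has_field_derivative z0) (at (of_real 1))"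
    by (rule derivative_eq_intros refl | simp)+
  then have "(radial has_vector_derivative z0) (at 1)"
    unfolding radial_def using has_vector_derivative_real_field by fastforce
  from along[OF this] have radial_der: "((\<lambda>t. Re (g (radial t))) has_real_derivative Re (z0 * g')) (at 1)"
    by (simp add: radial_def)
  have "Re (z0 * g') \<ge> 0"
  proof (rule ccontr)
    assume "\<not> Re (z0 * g') \<ge> 0"
    then obtain d where d: "d > 0" "\<And>h. h > 0 \<Longrightarrow> h < d \<Longrightarrow> Re (g (radial 1)) < Re (g (radial (1 - h)))"
      using DERIV_neg_dec_left[OF radial_der] by force
    define h where "h = min (d / 2) (1 / 2)"
    have h: "0 < h" "h < d" "1 - h \<le> 1" "0 \<le> 1 - h"
      using d by (auto simp: h_def)
    then have "norm (radial (1 - h)) \<le> norm z0"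
      unfolding radial_def norm_mult norm_of_real by (simp add: mult_left_le_one_le)
    then have "Re (g (radial (1 - h))) \<le> Re (g (radial 1))"
      using max by (simp add: radial_def)
    with d(2)[OF h(1,2)] show False
      by simp
  qed
  with Im show ?thesis
    by (simp add: complex_nonneg_Reals_iff)
qed

lemma continuous_on_ball_first_zero:
  fixes \<phi> :: "'a::euclidean_space \<Rightarrow> real"
  assumes cont: "continuous_on (ball 0 R) \<phi>" and neg: "\<phi> 0 < 0"
    and u: "u \<in> ball 0 R" "\<phi> u \<ge> 0"
  obtains z0 where "z0 \<in> ball 0 R" "z0 \<noteq> 0" "\<phi> z0 = 0" "\<And>z. norm z \<le> norm z0 \<Longrightarrow> \<phi> z \<le> 0"
proof -
  define K where "K = cball 0 (norm u) \<inter> \<phi> -` {0..}"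
  have sub: "cball 0 (norm u) \<subseteq> ball 0 R"
    using u by auto
  have "closed K"
    unfolding K_def
    by (rule continuous_closed_preimage) (use continuous_on_subset[OF cont sub] in auto)
  then have "compact K"
    by (simp add: compact_eq_bounded_closed K_def bounded_Int)
  moreover have "u \<in> K"
    using u by (auto simp: K_def)
  ultimately obtain z0 where z0: "z0 \<in> K" "\<And>z. z \<in> K \<Longrightarrow> norm z0 \<le> norm z"
    using compact_attains_inf[of "norm ` K"]
    by (metis (no_types, lifting) continuous_on_norm_id compact_continuous_image empty_iff image_iff)
  have z0_ball: "z0 \<in> ball 0 R"
    using z0(1) sub unfolding K_def by blast
  have "z0 \<noteq> 0"
    using z0(1) neg by (auto simp: K_def)
  then have r: "norm z0 > 0"
    by simp
  have inner: "\<phi> z < 0" if "norm z < norm z0" for z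
  proof (rule ccontr)
    assume "\<not> \<phi> z < 0"
    moreover have "norm z \<le> norm u"
      using that z0(1) by (auto simp: K_def)
    ultimately have "z \<in> K"
      by (auto simp: K_def)
    with z0(2) that show False
      by fastforce
  qed
  have le: "\<phi> z \<le> 0" if "norm z \<le> norm z0" for z
  proof -
    have "cball 0 (norm z0) \<subseteq> ball 0 R"
      using z0_ball by auto
    then have "continuous_on (closure (ball 0 (norm z0))) (\<lambda>z. - \<phi> z)"
      using r by (auto simp: closure_ball intro!: continuous_intros continuous_on_subset[OF cont])
    moreover have "z \<in> closure (ball 0 (norm z0))"
      using that r by (simp add: closure_ball)
    ultimately show ?thesis
      using continuous_ge_on_closure[of _ "\<lambda>z. - \<phi> z" z 0] inner by force
  qed
  have "\<phi> z0 = 0"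
    using le[of z0] z0(1) by (auto simp: K_def)
  with z0_ball \<open>z0 \<noteq> 0\<close> le show ?thesis
    using that by blast
qed

lemma holomorphic_factor_z:
  assumes "f holomorphic_on S" "open S" "f 0 = 0"
  obtains g where "g holomorphic_on S" "g 0 = deriv f 0" "\<And>z. f z = z * g z"
proof
  show "(\<lambda>z. if z = 0 then deriv f 0 else (f z - f 0) / (z - 0)) holomorphic_on S"
    using pole_lemma_open[OF assms(1,2)] .
qed (use assms(3) in auto)

lemma Jack_lemma:
  fixes \<psi> :: "complex \<Rightarrow> complex"
  assumes hol: "\<psi> holomorphic_on ball 0 1" and \<omega>: "\<And>z. \<omega> z = z ^ n * \<psi> z"
    and z0: "z0 \<in> ball 0 1" "z0 \<noteq> 0" "\<omega> z0 \<noteq> 0"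
    and max: "\<And>z. norm z \<le> norm z0 \<Longrightarrow> norm (\<omega> z) \<le> norm (\<omega> z0)"
  obtains k :: real where "k \<ge> n" "z0 * deriv \<omega> z0 = of_real k * \<omega> z0"
proof -
  have \<omega>_eq: "\<omega> = (\<lambda>z. z ^ n * \<psi> z)"
    using \<omega> by blast
  have "\<psi> z0 \<noteq> 0"
    using z0(3) \<omega> by auto
  define r where "r = norm z0"
  have r: "r > 0"
    using z0 by (simp add: r_def)
  have sub: "cball 0 r \<subseteq> ball 0 1"
    using z0(1) by (auto simp: r_def)
  have max_\<psi>: "norm (\<psi> z) \<le> norm (\<psi> z0)" if "norm z \<le> r" for z
  proof (rule maximum_modulus_frontier[of \<psi> "cball 0 r"])
    show "\<psi> holomorphic_on interior (cball 0 r)"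
      using holomorphic_on_subset[OF hol, of "ball 0 r"] sub ball_subset_cball by force
    show "continuous_on (closure (cball 0 r)) \<psi>"
      using continuous_on_subset[OF holomorphic_on_imp_continuous_on[OF hol] sub] by simp
    fix w :: complex
    assume "w \<in> frontier (cball 0 r)"
    then have w: "norm w = r"
      using r by (simp add: frontier_cball)
    then have "r ^ n * norm (\<psi> w) \<le> r ^ n * norm (\<psi> z0)"
      using max[of w] by (simp add: \<omega> r_def norm_mult norm_power)
    then show "norm (\<psi> w) \<le> norm (\<psi> z0)"
      using r by simp
  qed (use that in auto)
  define \<psi>0 where "\<psi>0 = \<psi> z0"
  define \<psi>1 where "\<psi>1 = deriv \<psi> z0"
  have der_\<psi>: "(\<psi> has_field_derivative \<psi>1) (at z0)"
    unfolding \<psi>1_def by (rule holomorphic_derivI[OF hol open_ball z0(1)])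
  have cnj_\<psi>0: "\<psi>0 * cnj \<psi>0 = of_real ((norm \<psi>0)\<^sup>2)"
    by (rule complex_norm_square[symmetric])
  have "Re (\<psi> z * cnj \<psi>0) \<le> Re (\<psi> z0 * cnj \<psi>0)" if "norm z \<le> norm z0" for z
  proof -
    have "Re (\<psi> z * cnj \<psi>0) \<le> norm (\<psi> z) * norm \<psi>0"
      using complex_Re_le_cmod[of "\<psi> z * cnj \<psi>0"] by (simp add: norm_mult)
    also have "\<dots> \<le> (norm \<psi>0)\<^sup>2"
      using max_\<psi>[of z] that by (simp add: r_def \<psi>0_def power2_eq_square mult_right_mono)
    finally show ?thesis
      using cnj_\<psi>0 by (simp add: \<psi>0_def)
  qed
  with DERIV_cmult_right[OF der_\<psi>] have "z0 * (\<psi>1 * cnj \<psi>0) \<in> \<real>\<^sub>\<ge>\<^sub>0"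
    by (rule max_Re_imp_radial_deriv_nonneg_Reals)
  then obtain \<sigma> where \<sigma>: "\<sigma> \<ge> 0" "z0 * (\<psi>1 * cnj \<psi>0) = of_real \<sigma>"
    by (metis nonneg_Reals_cases nonneg_Reals_of_real_iff)
  have "z0 * \<psi>1 * of_real ((norm \<psi>0)\<^sup>2) = of_real \<sigma> * \<psi>0"
    using \<sigma>(2) cnj_\<psi>0 by (metis mult.assoc mult.commute)
  then have z0_\<psi>1: "z0 * \<psi>1 = of_real (\<sigma> / (norm \<psi>0)\<^sup>2) * \<psi>0"
    using \<open>\<psi> z0 \<noteq> 0\<close> by (simp add: \<psi>0_def field_simps)
  have "(\<omega> has_field_derivative of_nat n * z0 ^ (n - 1) * \<psi>0 + z0 ^ n * \<psi>1) (at z0)"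
    unfolding \<omega>_eq by (rule derivative_eq_intros der_\<psi> refl | simp add: \<psi>0_def)+
  then have "z0 * deriv \<omega> z0
      = of_nat n * (z0 * z0 ^ (n - 1)) * \<psi>0 + z0 ^ n * (z0 * \<psi>1)"
    by (simp add: DERIV_imp_deriv algebra_simps)
  also have "\<dots> = of_real (n + \<sigma> / (norm \<psi>0)\<^sup>2) * \<omega> z0"
    unfolding z0_\<psi>1 \<omega> \<psi>0_def by (cases n) (simp_all add: algebra_simps)
  finally show ?thesis
    using that[of "n + \<sigma> / (norm \<psi>0)\<^sup>2"] \<sigma>(1) by simp
qed

lemma Re_divide_one_minus_unimodular:
  fixes w :: complex
  assumes "norm w = 1" "w \<noteq> 1"
  shows "Re (w / (1 - w)) = - 1 / 2"
proof -
  have n: "(Re w)\<^sup>2 + (Im w)\<^sup>2 = 1"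
    using assms(1) by (simp add: cmod_def)
  have "Re w \<noteq> 1"
    using n assms(2) by (auto simp: complex_eq_iff)
  have "Re (w / (1 - w)) = (Re w - (Re w)\<^sup>2 - (Im w)\<^sup>2) / ((1 - Re w)\<^sup>2 + (Im w)\<^sup>2)"
    by (simp add: Re_divide power2_eq_square algebra_simps)
  also have "\<dots> = (Re w - 1) / (2 * (1 - Re w))"
    using n by (simp add: power2_eq_square algebra_simps)
  also have "\<dots> = - 1 / 2"
    using \<open>Re w \<noteq> 1\<close> by (simp add: field_simps)
  finally show ?thesis .
qed

lemma has_field_derivative_starlike_quotient:
  assumes f: "(f has_field_derivative f' z) (at z)" and f': "(f' has_field_derivative f'') (at z)"
    and nz: "z \<noteq> 0" "f z \<noteq> 0" "f' z \<noteq> 0"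
  shows "((\<lambda>w. w * f' w / f w) has_field_derivative
      (z * f' z / f z) * (1 + z * f'' / f' z - z * f' z / f z) / z) (at z)"
  by (rule DERIV_cong[OF DERIV_divide[OF DERIV_mult[OF DERIV_ident f'] f]])
     (use nz in \<open>simp_all add: field_simps power2_eq_square\<close>)

lemma has_field_derivative_U_functional:
  assumes f: "(f has_field_derivative f' z) (at z)" and f': "(f' has_field_derivative f'') (at z)"
    and nz: "z \<noteq> 0" "f z \<noteq> 0" "f' z \<noteq> 0"
  shows "((\<lambda>w. (w / f w)\<^sup>2 * f' w) has_field_derivative
      (z / f z)\<^sup>2 * f' z * (2 - 2 * (z * f' z / f z) + z * f'' / f' z) / z) (at z)"
  by (rule DERIV_cong[OF DERIV_mult[OF DERIV_power[OF DERIV_divide[OF DERIV_ident f]] f']])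
     (use nz in \<open>simp_all add: field_simps power2_eq_square\<close>)

lemma classA_divide_z:
  assumes f: "f \<in> classA" and nz: "\<And>z. z \<in> ball 0 1 \<Longrightarrow> z \<noteq> 0 \<Longrightarrow> f z \<noteq> 0"
  obtains F where "F holomorphic_on ball 0 1" "F 0 = 1" "\<And>z. f z = z * F z"
    "\<And>z. z \<in> ball 0 1 \<Longrightarrow> F z \<noteq> 0"
proof -
  have "f holomorphic_on ball 0 1" "f 0 = 0" "deriv f 0 = 1"
    using f by (auto simp: classA_def analytic_imp_holomorphic)
  then obtain F where "F holomorphic_on ball 0 1" "F 0 = 1" "\<And>z. f z = z * F z"
    by (metis holomorphic_factor_z open_ball)
  with nz show ?thesis
    using that by (metis mult_zero_right one_neq_zero)
qed

text \<open>With \<open>h\<close> the holomorphic extension of \<open>z / f z\<close>, the functional defining \<open>classU\<close> is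
  \<open>(z / f z)\<^sup>2 * f' z = h z - z * h' z\<close>, which equals \<open>1\<close> to second order at \<open>0\<close>.\<close>
lemma U_functional_double_zero:
  assumes f: "f \<in> classA" and nz: "\<And>z. z \<in> ball 0 1 \<Longrightarrow> z \<noteq> 0 \<Longrightarrow> f z \<noteq> 0"
  obtains \<psi> where "\<psi> holomorphic_on ball 0 1"
    "\<And>z. z \<in> ball 0 1 \<Longrightarrow> z \<noteq> 0 \<Longrightarrow> (z / f z)\<^sup>2 * deriv f z = 1 - z\<^sup>2 * \<psi> z"
proof -
  obtain F where F: "F holomorphic_on ball 0 1" "F 0 = 1" "\<And>z. f z = z * F z"
    "\<And>z. z \<in> ball 0 1 \<Longrightarrow> F z \<noteq> 0"
    using classA_divide_z[OF f nz] by blast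
  define h where "h = (\<lambda>z. inverse (F z))"
  have hol_h: "h holomorphic_on ball 0 1"
    unfolding h_def using F by (auto intro!: holomorphic_intros)
  have hol_h': "deriv h holomorphic_on ball 0 1"
    by (rule holomorphic_deriv[OF hol_h open_ball])
  have der_F: "(F has_field_derivative deriv F z) (at z)" if "z \<in> ball 0 1" for z
    by (rule holomorphic_derivI[OF F(1) open_ball that])
  have U_eq: "(z / f z)\<^sup>2 * deriv f z = h z - z * deriv h z" if z: "z \<in> ball 0 1" "z \<noteq> 0" for z
  proof -
    have "f = (\<lambda>w. w * F w)"
      using F(3) by blast
    then have "deriv f z = F z + z * deriv F z"
      using der_F[OF z(1)] by (auto intro!: DERIV_imp_deriv derivative_eq_intros)
    moreover have "deriv h z = - deriv F z / (F z)\<^sup>2"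
      unfolding h_def using DERIV_inverse_fun[OF der_F[OF z(1)] F(4)[OF z(1)]]
      by (auto intro!: DERIV_imp_deriv simp: divide_inverse power2_eq_square)
    ultimately show ?thesis
      using z F(4)[OF z(1)] by (simp add: F(3) h_def field_simps power2_eq_square)
  qed
  define \<omega> where "\<omega> = (\<lambda>z. 1 - h z + z * deriv h z)"
  have hol_\<omega>: "\<omega> holomorphic_on ball 0 1"
    unfolding \<omega>_def using hol_h hol_h' by (auto intro!: holomorphic_intros)
  have "(\<omega> has_field_derivative - deriv h 0 + (deriv h 0 + 0 * deriv (deriv h) 0)) (at 0)"
    unfolding \<omega>_def
    by (rule derivative_eq_intros holomorphic_derivI[OF hol_h open_ball]
        holomorphic_derivI[OF hol_h' open_ball] refl | simp)+
  then have "deriv \<omega> 0 = 0"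
    by (simp add: DERIV_imp_deriv)
  moreover have "\<omega> 0 = 0"
    using F(2) by (simp add: \<omega>_def h_def)
  ultimately obtain \<omega>1 where \<omega>1: "\<omega>1 holomorphic_on ball 0 1" "\<omega>1 0 = 0" "\<And>z. \<omega> z = z * \<omega>1 z"
    using holomorphic_factor_z[OF hol_\<omega> open_ball] by metis
  then obtain \<psi> where \<psi>: "\<psi> holomorphic_on ball 0 1" "\<And>z. \<omega>1 z = z * \<psi> z"
    using holomorphic_factor_z[OF \<omega>1(1) open_ball] by metis
  show ?thesis
  proof (rule that[OF \<psi>(1)])
    fix z :: complex
    assume "z \<in> ball 0 1" "z \<noteq> 0"
    then have "(z / f z)\<^sup>2 * deriv f z = 1 - \<omega> z"
      using U_eq by (simp add: \<omega>_def)
    also have "\<dots> = 1 - z\<^sup>2 * \<psi> z"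
      using \<omega>1(3) \<psi>(2) by (simp add: power2_eq_square)
    finally show "(z / f z)\<^sup>2 * deriv f z = 1 - z\<^sup>2 * \<psi> z" .
  qed
qed

lemma alpha_convexD:
  assumes "f \<in> alpha_convex \<alpha>"
  shows "f \<in> classA" and "f holomorphic_on ball 0 1"
    and "\<And>z. z \<in> ball 0 1 \<Longrightarrow> z \<noteq> 0 \<Longrightarrow> f z \<noteq> 0"
    and "\<And>z. z \<in> ball 0 1 \<Longrightarrow> deriv f z \<noteq> 0"
    and "\<And>z. z \<in> ball 0 1 \<Longrightarrow> z \<noteq> 0 \<Longrightarrow>
      Re ((1 - of_real \<alpha>) * (z * deriv f z / f z)
        + of_real \<alpha> * (1 + z * deriv (deriv f) z / deriv f z)) > 0"
  using assms by (auto simp: alpha_convex_def classA_def analytic_imp_holomorphic)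

lemma alpha_convex_starlike:
  assumes f: "f \<in> alpha_convex \<alpha>" and z: "z \<in> ball 0 1" "z \<noteq> 0"
  shows "Re (z * deriv f z / f z) > 0"
proof (rule ccontr)
  assume nonpos: "\<not> Re (z * deriv f z / f z) > 0"
  note fA = alpha_convexD(1)[OF f] and hol = alpha_convexD(2)[OF f]
    and nz = alpha_convexD(3)[OF f] and nz' = alpha_convexD(4)[OF f] and cond = alpha_convexD(5)[OF f]
  have hol': "deriv f holomorphic_on ball 0 1"
    by (rule holomorphic_deriv[OF hol open_ball])
  obtain F where F: "F holomorphic_on ball 0 1" "F 0 = 1" "\<And>z. f z = z * F z"
    "\<And>z. z \<in> ball 0 1 \<Longrightarrow> F z \<noteq> 0"
    using classA_divide_z[OF fA nz] by blast
  define p where "p = (\<lambda>z. deriv f z / F z)"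
  have hol_p: "p holomorphic_on ball 0 1"
    unfolding p_def using F hol' by (auto intro!: holomorphic_intros)
  have p0: "p 0 = 1"
    using fA F by (simp add: p_def classA_def)
  have p_eq: "p w = w * deriv f w / f w" if "w \<noteq> 0" for w
    using that by (simp add: p_def F(3))
  have "continuous_on (ball 0 1) (\<lambda>w. - Re (p w))"
    using holomorphic_on_imp_continuous_on[OF hol_p] by (auto intro!: continuous_intros)
  then obtain z0 where z0: "z0 \<in> ball 0 1" "z0 \<noteq> 0" "Re (p z0) = 0"
    "\<And>w. norm w \<le> norm z0 \<Longrightarrow> - Re (p w) \<le> 0"
    by (rule continuous_on_ball_first_zero[where u = z])
       (use p0 z nonpos p_eq in auto)
  define P where "P = z0 * deriv f z0 / f z0"
  define T where "T = z0 * deriv (deriv f) z0 / deriv f z0"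
  have "((\<lambda>w. w * deriv f w / f w) has_field_derivative P * (1 + T - P) / z0) (at z0)"
    unfolding P_def T_def
    by (rule has_field_derivative_starlike_quotient
        holomorphic_derivI[OF hol open_ball z0(1)] holomorphic_derivI[OF hol' open_ball z0(1)]
        | use z0 nz nz' in auto)+
  then have "(p has_field_derivative P * (1 + T - P) / z0) (at z0)"
    by (rule has_field_derivative_transform_within_open[of _ _ _ "ball 0 1 - {0}"])
       (use z0 p_eq in auto)
  then have "z0 * (- (P * (1 + T - P) / z0)) \<in> \<real>\<^sub>\<ge>\<^sub>0"
    by (rule max_Re_imp_radial_deriv_nonneg_Reals[OF DERIV_minus]) (use z0(3,4) in auto)
  then have Im: "Im (P * (1 + T - P)) = 0"
    using z0(2) by (simp add: complex_nonneg_Reals_iff)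
  have RP: "Re P = 0" and "P \<noteq> 0"
    using z0 p_eq nz nz' by (auto simp: P_def)
  define s where "s = Re (P * (1 + T - P))"
  have s: "P * (1 + T - P) = of_real s"
    using Im by (simp add: s_def complex_eq_iff)
  have "(1 - of_real \<alpha>) * P + of_real \<alpha> * (1 + T) = P + of_real (\<alpha> * s) / P"
    unfolding of_real_mult s[symmetric] using \<open>P \<noteq> 0\<close> by (simp add: field_simps)
  then have "Re ((1 - of_real \<alpha>) * P + of_real \<alpha> * (1 + T)) = 0"
    using RP Im by (simp add: Re_divide)
  then show False
    using cond[OF z0(1,2)] by (simp add: P_def T_def)
qed

lemma Re_alpha_combination_nonpos:
  fixes P T w :: complex and \<alpha> k :: real
  assumes "\<alpha> \<le> -1" "k \<ge> 2" "Re P > 0" "norm w = 1" "w \<noteq> 1"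
    and T: "T = 2 * P - 2 - of_real k * (w / (1 - w))"
  shows "Re ((1 - of_real \<alpha>) * P + of_real \<alpha> * (1 + T)) \<le> 0"
proof -
  define X where "X = w / (1 - w)"
  have "(1 - of_real \<alpha>) * P + of_real \<alpha> * (1 + T)
      = of_real (1 + \<alpha>) * P - of_real \<alpha> - of_real (\<alpha> * k) * X"
    unfolding T X_def[symmetric] by (simp add: algebra_simps)
  then have "Re ((1 - of_real \<alpha>) * P + of_real \<alpha> * (1 + T))
      = (1 + \<alpha>) * Re P - \<alpha> - \<alpha> * k * Re X"
    by simp
  also have "\<dots> = (1 + \<alpha>) * Re P + \<alpha> * (k / 2 - 1)"
    using Re_divide_one_minus_unimodular[OF assms(4,5)] by (simp add: X_def algebra_simps)
  also have "\<dots> \<le> 0"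
  proof -
    have "(1 + \<alpha>) * Re P \<le> 0" "\<alpha> * (k / 2 - 1) \<le> 0"
      using assms(1-3) by (simp_all add: mult_nonpos_nonneg)
    then show ?thesis
      by linarith
  qed
  finally show ?thesis .
qed

lemma alpha_convex_subset_classU:
  assumes \<alpha>: "\<alpha> \<le> -1"
  shows "alpha_convex \<alpha> \<subseteq> classU"
proof
  fix f
  assume f: "f \<in> alpha_convex \<alpha>"
  note fA = alpha_convexD(1)[OF f] and hol = alpha_convexD(2)[OF f]
    and nz = alpha_convexD(3)[OF f] and nz' = alpha_convexD(4)[OF f] and cond = alpha_convexD(5)[OF f]
  have hol': "deriv f holomorphic_on ball 0 1"
    by (rule holomorphic_deriv[OF hol open_ball])
  obtain \<psi> where hol_\<psi>: "\<psi> holomorphic_on ball 0 1"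
    and U_eq: "\<And>z. z \<in> ball 0 1 \<Longrightarrow> z \<noteq> 0 \<Longrightarrow> (z / f z)\<^sup>2 * deriv f z = 1 - z\<^sup>2 * \<psi> z"
    using U_functional_double_zero[OF fA nz] by blast
  define \<omega> where "\<omega> = (\<lambda>z. z\<^sup>2 * \<psi> z)"
  show "f \<in> classU"
  proof (rule ccontr)
    assume "f \<notin> classU"
    then obtain z1 where z1: "z1 \<in> ball 0 1" "z1 \<noteq> 0" "norm ((z1 / f z1)\<^sup>2 * deriv f z1 - 1) \<ge> 1"
      using fA by (auto simp: classU_def)
    have "continuous_on (ball 0 1) (\<lambda>z. norm (\<omega> z) - 1)"
      unfolding \<omega>_def using holomorphic_on_imp_continuous_on[OF hol_\<psi>]
      by (auto intro!: continuous_intros)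
    then obtain z0 where z0: "z0 \<in> ball 0 1" "z0 \<noteq> 0" "norm (\<omega> z0) = 1"
      "\<And>z. norm z \<le> norm z0 \<Longrightarrow> norm (\<omega> z) \<le> 1"
      by (rule continuous_on_ball_first_zero[where u = z1])
         (use z1 U_eq[OF z1(1,2)] in \<open>auto simp: \<omega>_def norm_minus_commute\<close>)
    have \<omega>_eq: "\<And>z. \<omega> z = z ^ 2 * \<psi> z"
      by (simp add: \<omega>_def)
    have \<omega>_z0: "\<omega> z0 \<noteq> 0"
      using z0(3) by auto
    have \<omega>_max: "norm (\<omega> z) \<le> norm (\<omega> z0)" if "norm z \<le> norm z0" for z
      using z0(3,4) that by simp
    obtain k :: real where k: "k \<ge> 2" "z0 * deriv \<omega> z0 = of_real k * \<omega> z0"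
      using Jack_lemma[OF hol_\<psi> \<omega>_eq z0(1,2) \<omega>_z0 \<omega>_max] by auto
    define Q where "Q = (z0 / f z0)\<^sup>2 * deriv f z0"
    define P where "P = z0 * deriv f z0 / f z0"
    define T where "T = z0 * deriv (deriv f) z0 / deriv f z0"
    have "((\<lambda>w. (w / f w)\<^sup>2 * deriv f w) has_field_derivative Q * (2 - 2 * P + T) / z0) (at z0)"
      unfolding Q_def P_def T_def
      by (rule has_field_derivative_U_functional
          holomorphic_derivI[OF hol open_ball z0(1)] holomorphic_derivI[OF hol' open_ball z0(1)]
          | use z0 nz nz' in auto)+
    then have "((\<lambda>w. 1 - (w / f w)\<^sup>2 * deriv f w) has_field_derivative 0 - Q * (2 - 2 * P + T) / z0) (at z0)"
      by (rule DERIV_diff[OF DERIV_const])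
    then have "(\<omega> has_field_derivative 0 - Q * (2 - 2 * P + T) / z0) (at z0)"
      by (rule has_field_derivative_transform_within_open[of _ _ _ "ball 0 1 - {0}"])
         (use z0 U_eq in \<open>auto simp: \<omega>_def\<close>)
    then have Jack: "- (Q * (2 - 2 * P + T)) = of_real k * \<omega> z0"
      using k(2) z0(2) by (simp add: DERIV_imp_deriv)
    have Q_eq: "Q = 1 - \<omega> z0"
      using U_eq[OF z0(1,2)] by (simp add: Q_def \<omega>_def)
    have "Q \<noteq> 0"
      using z0 nz nz' by (simp add: Q_def)
    then have T_eq: "T = 2 * P - 2 - of_real k * (\<omega> z0 / (1 - \<omega> z0))"
      using Jack by (simp add: Q_eq[symmetric] field_simps)
    have "\<omega> z0 \<noteq> 1"
      using \<open>Q \<noteq> 0\<close> Q_eq by auto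
    have "Re ((1 - of_real \<alpha>) * P + of_real \<alpha> * (1 + T)) \<le> 0"
      by (rule Re_alpha_combination_nonpos[OF \<alpha> k(1) alpha_convex_starlike[OF f z0(1,2), folded P_def]
            z0(3) \<open>\<omega> z0 \<noteq> 1\<close> T_eq])
    then show False
      using cond[OF z0(1,2)] by (simp add: P_def T_def)
  qed
qed

lemma alpha_convex_one_subset:
  assumes "0 \<le> \<alpha>" "\<alpha> \<le> 1"
  shows "alpha_convex 1 \<subseteq> alpha_convex \<alpha>"
proof
  fix f
  assume f: "f \<in> alpha_convex 1"
  have "Re ((1 - of_real \<alpha>) * (z * deriv f z / f z)
      + of_real \<alpha> * (1 + z * deriv (deriv f) z / deriv f z)) > 0"
    if z: "z \<in> ball 0 1" "z \<noteq> 0" for z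
  proof -
    define X where "X = z * deriv f z / f z"
    define Y where "Y = 1 + z * deriv (deriv f) z / deriv f z"
    have "Re X > 0"
      using alpha_convex_starlike[OF f z] by (simp add: X_def)
    moreover have "Re Y > 0"
      using f z by (auto simp: alpha_convex_def Y_def)
    ultimately have "(1 - \<alpha>) * Re X + \<alpha> * Re Y > 0"
      using assms by (smt (verit) mult_nonneg_nonneg mult_pos_pos)
    then show ?thesis
      unfolding X_def[symmetric] Y_def[symmetric] by simp
  qed
  with f show "f \<in> alpha_convex \<alpha>"
    unfolding alpha_convex_def by blast
qed

definition neg_Ln_one_minus :: "complex \<Rightarrow> complex" where
  "neg_Ln_one_minus z = - Ln (1 - z)"

lemma neg_Ln_one_minus_has_field_derivative:
  assumes "z \<in> ball 0 1"
  shows "(neg_Ln_one_minus has_field_derivative 1 / (1 - z)) (at z)"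
proof -
  have "Re (1 - z) > 0"
    using assms complex_Re_le_cmod[of z] by auto
  then have "1 - z \<notin> \<real>\<^sub>\<le>\<^sub>0"
    by (auto simp: complex_nonpos_Reals_iff)
  then show ?thesis
    unfolding neg_Ln_one_minus_def[abs_def]
    by (auto intro!: derivative_eq_intros simp: field_simps)
qed

lemma deriv_neg_Ln_one_minus:
  assumes "z \<in> ball 0 1"
  shows "deriv neg_Ln_one_minus z = 1 / (1 - z)"
  by (rule DERIV_imp_deriv[OF neg_Ln_one_minus_has_field_derivative[OF assms]])

lemma deriv2_neg_Ln_one_minus:
  assumes z: "z \<in> ball 0 1"
  shows "deriv (deriv neg_Ln_one_minus) z = 1 / (1 - z)\<^sup>2"
proof -
  have "1 - z \<noteq> 0"
    using z by auto
  then have "((\<lambda>z. 1 / (1 - z)) has_field_derivative 1 / (1 - z)\<^sup>2) (at z)"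
    by (auto intro!: derivative_eq_intros simp: power2_eq_square)
  then have "(deriv neg_Ln_one_minus has_field_derivative 1 / (1 - z)\<^sup>2) (at z)"
    by (rule has_field_derivative_transform_within_open[of _ _ _ "ball 0 1"])
       (use z deriv_neg_Ln_one_minus in auto)
  then show ?thesis
    by (rule DERIV_imp_deriv)
qed

lemma neg_Ln_one_minus_convex: "neg_Ln_one_minus \<in> alpha_convex 1"
proof -
  have "neg_Ln_one_minus holomorphic_on ball 0 1"
    using neg_Ln_one_minus_has_field_derivative holomorphic_on_open[OF open_ball] by blast
  then have "neg_Ln_one_minus \<in> classA"
    by (simp add: classA_def analytic_on_open deriv_neg_Ln_one_minus neg_Ln_one_minus_def)
  moreover have "neg_Ln_one_minus z \<noteq> 0" if "z \<in> ball 0 1" "z \<noteq> 0" for z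
  proof
    assume "neg_Ln_one_minus z = 0"
    then have "exp (Ln (1 - z)) = 1"
      by (simp add: neg_Ln_one_minus_def)
    moreover have "1 - z \<noteq> 0"
      using that by auto
    ultimately show False
      using that by simp
  qed
  moreover have "Re (1 + z * deriv (deriv neg_Ln_one_minus) z / deriv neg_Ln_one_minus z) > 0"
    if z: "z \<in> ball 0 1" for z
  proof -
    have "1 - z \<noteq> 0" "Re (1 - z) > 0"
      using z complex_Re_le_cmod[of z] by auto
    moreover have "1 + z * deriv (deriv neg_Ln_one_minus) z / deriv neg_Ln_one_minus z = 1 / (1 - z)"
      using \<open>1 - z \<noteq> 0\<close>
      by (simp add: deriv_neg_Ln_one_minus[OF z] deriv2_neg_Ln_one_minus[OF z] divide_simps power2_eq_square)
    ultimately show ?thesis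
      by (simp add: Re_divide')
  qed
  ultimately show ?thesis
    by (auto simp: alpha_convex_def deriv_neg_Ln_one_minus)
qed

lemma neg_Ln_one_minus_not_classU: "neg_Ln_one_minus \<notin> classU"
proof
  assume U: "neg_Ln_one_minus \<in> classU"
  define z where "z = complex_of_real (99 / 100)"
  have z: "z \<in> ball 0 1" "z \<noteq> 0"
    by (auto simp: z_def)
  define L where "L = ln (100 :: real)"
  have "(100 :: real) \<le> 2 ^ 7"
    by simp
  also have "\<dots> \<le> exp 1 ^ 7"
    using exp_ge_add_one_self[of "1 :: real"] by (intro power_mono) simp_all
  also have "\<dots> = exp 7"
    using exp_of_nat_mult[of 7 "1 :: real"] by simp
  finally have "L \<le> 7"
    unfolding L_def by (metis exp_gt_zero ln_exp ln_le_cancel_iff zero_less_numeral)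
  moreover have "L > 0"
    by (simp add: L_def)
  ultimately have "L\<^sup>2 \<le> 49"
    using power_mono[of L 7 2] by simp
  have "1 - z = of_real (1 / 100)"
    by (simp add: z_def)
  then have "neg_Ln_one_minus z = - of_real (ln (1 / 100))"
    unfolding neg_Ln_one_minus_def \<open>1 - z = of_real (1 / 100)\<close> by (subst Ln_of_real) simp_all
  also have "ln (1 / 100 :: real) = - L"
    by (simp add: L_def ln_div)
  finally have Lz: "neg_Ln_one_minus z = of_real L"
    by simp
  have dz: "deriv neg_Ln_one_minus z = 100"
    using deriv_neg_Ln_one_minus[OF z(1)] by (simp add: z_def)
  define v where "v = 9801 / 100 / L\<^sup>2 - 1"
  have "(z / neg_Ln_one_minus z)\<^sup>2 * deriv neg_Ln_one_minus z - 1 = of_real v"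
    unfolding Lz dz by (simp add: z_def v_def power_divide)
  moreover have "v \<ge> 1"
    using \<open>L\<^sup>2 \<le> 49\<close> \<open>L > 0\<close> by (simp add: v_def field_simps)
  ultimately have "norm ((z / neg_Ln_one_minus z)\<^sup>2 * deriv neg_Ln_one_minus z - 1) \<ge> 1"
    by simp
  with U z show False
    by (auto simp: classU_def)
qed

theorem theorem3:
  shows "(\<forall>\<alpha>::real. \<alpha> \<le> -1 \<longrightarrow> alpha_convex \<alpha> \<subseteq> classU) \<and>
         (\<forall>\<alpha>::real. 0 \<le> \<alpha> \<and> \<alpha> \<le> 1 \<longrightarrow> \<not> (alpha_convex \<alpha> \<subseteq> classU))"
  using alpha_convex_subset_classU alpha_convex_one_subset neg_Ln_one_minus_convex
    neg_Ln_one_minus_not_classU by blast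

end
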